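(* Let $q_1,\dots,q_8$ be the eight vertices $(\pm1,\pm1,\pm1)$ of a cube in $\mathbb{R}^3$, let $t\in(0,1)$ and let $q_{j+8}=tq_j$ for $j=1,\dots,8$. Suppose that positive masses $m_1,\dots,m_{16}$ placed at $q_1,\dots,q_{16}$ form a central configuration. Then $m_1=\dots=m_8$ and $m_9=\dots=m_{16}$.
   Context: A configuration $q=(q_1,\dots,q_N)$ of distinct points in $\mathbb{R}^3$ with masses $m_1,\dots,m_N$ is a central configuration if there exists $c\in\mathbb{R}$ such that $\sum_{j\neq i} m_j\left(\frac{1}{|q_j-q_i|^3}-c\right)(q_j-q_i)=0$ for all $i=1,\dots,N$. *)

theory Defs
  imports "HOL-Analysis.Analysis"
begin

definition central_configuration ::
  "nat \<Rightarrow> (nat \<Rightarrow> real) \<Rightarrow> (nat \<Rightarrow> real^3) \<Rightarrow> bool" where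
  "central_configuration N m q \<longleftrightarrow>
     (\<forall>i<N. \<forall>j<N. i \<noteq> j \<longrightarrow> q i \<noteq> q j) \<and>
     (\<exists>c::real. \<forall>i<N.
        (\<Sum>j\<in>{..<N} - {i}. (m j * (1 / norm (q j - q i) ^ 3 - c)) *\<^sub>R (q j - q i)) = 0)"

text \<open>The eight cube vertices (+-1,+-1,+-1), indexed by 0..7 (bit k of the index
 determines the sign of coordinate k).\<close>

definition cube_vertex :: "nat \<Rightarrow> real^3" where
  "cube_vertex j = vector [if odd j then -1 else 1,
                           if odd (j div 2) then -1 else 1,
                           if odd (j div 4) then -1 else 1]"

definition nested_cubes :: "real \<Rightarrow> nat \<Rightarrow> real^3" where
  "nested_cubes t j = (if j < 8 then cube_vertex j else t *\<^sub>R cube_vertex (j - 8))"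

end

theory Submission
  imports Defs
begin

text \<open>Index the vertices by \<open>j < 8\<close>, so that the reflections of the cube in the coordinate
  planes act on indices by \<open>XOR\<close>; both cubes are invariant under this group \<open>(\<int>/2)\<^sup>3\<close>. The
  inverse cubed distance between \<open>a q j\<close> and \<open>b q i\<close> depends only on the Hamming distance of
  \<open>i\<close> and \<open>j\<close>, so pairing the coordinate equations with a character \<open>\<chi>\<close> of the group (a Walsh
  function) decouples them: the Walsh coefficients \<open>\<Sum>j. \<chi> j * m j\<close> and \<open>\<Sum>j. \<chi> j * m (j + 8)\<close>
  satisfy a homogeneous 2\<times>2 linear system whose entries are Krawtchouk transforms of the inverse
  cubed distances. For nonconstant \<open>\<chi>\<close> its determinant is nonzero by two explicit inequalities
  between these distances, which rational bounds on \<open>u powr (-3/2)\<close> reduce to polynomial ones.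
  Hence all nonconstant Walsh coefficients of the masses vanish: the masses are constant on each
  cube.\<close>

unbundle bit_operations_syntax

section \<open>Walsh analysis on the vertices of the cube\<close>

definition bit_sign :: "nat \<Rightarrow> nat \<Rightarrow> real" where
  "bit_sign k j = (if odd (j div 2 ^ k) then -1 else 1)"

definition walsh :: "nat set \<Rightarrow> nat \<Rightarrow> real" where
  "walsh S j = (\<Prod>k\<in>S. bit_sign k j)"

definition hamming :: "nat \<Rightarrow> nat \<Rightarrow> nat" where
  "hamming i j = (\<Sum>k<3. of_bool (bit_sign k i \<noteq> bit_sign k j))"

definition kernel_eigenvalue :: "nat set \<Rightarrow> (nat \<Rightarrow> real) \<Rightarrow> real" where
  "kernel_eigenvalue S F = (\<Sum>d<8. walsh S d * F (hamming d 0))"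

lemma bit_sign_cases: "bit_sign k j = 1 \<or> bit_sign k j = -1"
  by (simp add: bit_sign_def)

lemma bit_sign_xor: "bit_sign k (i XOR j) = bit_sign k i * bit_sign k j"
  by (simp add: bit_sign_def bit_iff_odd[symmetric] bit_xor_iff)

lemma walsh_xor: "walsh S (i XOR j) = walsh S i * walsh S j"
  by (simp add: walsh_def bit_sign_xor prod.distrib)

lemma hamming_xor: "hamming (j XOR d) j = hamming d 0"
  unfolding hamming_def
  by (intro sum.cong refl) (simp add: bit_sign_xor, simp add: bit_sign_def)

lemma xor_less_8:
  fixes j d :: nat
  assumes "j < 8" "d < 8"
  shows "j XOR d < 8"
proof -
  have "take_bit 3 j = j" "take_bit 3 d = d"
    using assms by (simp_all add: take_bit_nat_eq_self_iff)
  then have "take_bit 3 (j XOR d) = j XOR d" by simp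
  then show ?thesis using take_bit_nat_eq_self_iff[of 3 "j XOR d"] by simp
qed

lemma sum_lessThan_8_xor_shift:
  fixes f :: "nat \<Rightarrow> real"
  assumes "j < 8"
  shows "(\<Sum>i<8. f i) = (\<Sum>d<8. f (j XOR d))"
proof -
  have cancel: "j XOR (j XOR i) = i" for i :: nat by (simp add: xor.assoc[symmetric])
  show ?thesis
    by (rule sum.reindex_bij_witness[of _ "\<lambda>i. j XOR i" "\<lambda>i. j XOR i"])
      (use assms in \<open>auto simp: xor_less_8 cancel\<close>)
qed

lemma walsh_convolution:
  assumes "j < 8"
  shows "(\<Sum>i<8. walsh S i * F (hamming i j)) = walsh S j * kernel_eigenvalue S F"
proof -
  have "(\<Sum>i<8. walsh S i * F (hamming i j))
      = (\<Sum>d<8. walsh S (j XOR d) * F (hamming (j XOR d) j))"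
    by (rule sum_lessThan_8_xor_shift[OF assms])
  also have "\<dots> = walsh S j * kernel_eigenvalue S F"
    by (simp add: kernel_eigenvalue_def walsh_xor hamming_xor sum_distrib_left mult.assoc)
  finally show ?thesis .
qed

lemma walsh_transform_force:
  assumes T: "\<And>i. walsh T i = walsh S i * bit_sign k i"
  shows "(\<Sum>i<8. walsh S i * bit_sign k i *
            (\<Sum>j<8. x j * F (hamming i j) * (a * bit_sign k j - b * bit_sign k i)))
       = (\<Sum>j<8. walsh S j * x j) * (a * kernel_eigenvalue T F - b * kernel_eigenvalue S F)"
proof -
  have summand:
    "walsh S i * bit_sign k i * (x j * F (hamming i j) * (a * bit_sign k j - b * bit_sign k i))
      = x j * (a * bit_sign k j * (walsh T i * F (hamming i j)) - b * (walsh S i * F (hamming i j)))"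
    for i j
    using bit_sign_cases[of k i] unfolding T by (auto simp: algebra_simps)
  have T_back: "bit_sign k j * walsh T j = walsh S j" for j
    using bit_sign_cases[of k j] unfolding T by auto
  have "(\<Sum>i<8. walsh S i * bit_sign k i *
            (\<Sum>j<8. x j * F (hamming i j) * (a * bit_sign k j - b * bit_sign k i)))
      = (\<Sum>i<8. \<Sum>j<8. x j * (a * bit_sign k j * (walsh T i * F (hamming i j))
                                - b * (walsh S i * F (hamming i j))))"
    by (simp only: sum_distrib_left summand)
  also have "\<dots> = (\<Sum>j<8. \<Sum>i<8. x j * (a * bit_sign k j * (walsh T i * F (hamming i j))
                                - b * (walsh S i * F (hamming i j))))"
    by (rule sum.swap)
  also have "\<dots> = (\<Sum>j<8. x j * (a * bit_sign k j * (\<Sum>i<8. walsh T i * F (hamming i j))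
                        - b * (\<Sum>i<8. walsh S i * F (hamming i j))))"
    by (simp only: sum_distrib_left sum_subtractf[symmetric])
  also have "\<dots> = (\<Sum>j<8. x j * (a * (bit_sign k j * walsh T j) * kernel_eigenvalue T F
                        - b * walsh S j * kernel_eigenvalue S F))"
    by (simp add: walsh_convolution mult.assoc)
  also have "\<dots> = (\<Sum>j<8. walsh S j * x j) * (a * kernel_eigenvalue T F - b * kernel_eigenvalue S F)"
    by (simp only: T_back) (simp add: sum_distrib_left sum_distrib_right sum_subtractf algebra_simps)
  finally show ?thesis .
qed

text \<open>The Krawtchouk polynomial \<open>K\<^sub>r(h)\<close> of the 3-cube: the sum of a character of weight \<open>r\<close>
  over the vertices of weight \<open>h\<close>.\<close>

definition krawtchouk :: "nat \<Rightarrow> nat \<Rightarrow> real" where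
  "krawtchouk r h = (\<Sum>i\<le>h. (-1) ^ i * (r choose i) * ((3 - r) choose (h - i)))"

definition krawtchouk_transform :: "nat \<Rightarrow> (nat \<Rightarrow> real) \<Rightarrow> real" where
  "krawtchouk_transform r F = (\<Sum>h\<le>3. krawtchouk r h * F h)"

lemma krawtchouk_transform_eq:
  "krawtchouk_transform 1 F = F 0 + F 1 - F 2 - F 3"
  "krawtchouk_transform 2 F = F 0 - F 1 - F 2 + F 3"
  "krawtchouk_transform 3 F = F 0 - 3 * F 1 + 3 * F 2 - F 3"
  by (simp_all add: krawtchouk_transform_def krawtchouk_def atMost_Suc numeral_eq_Suc)

lemma krawtchouk_transform_diff_const:
  assumes "1 \<le> r" "r \<le> 3"
  shows "krawtchouk_transform r (\<lambda>h. F h - c) = krawtchouk_transform r F"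
proof -
  have "r = 1 \<or> r = 2 \<or> r = 3" using assms by auto
  then show ?thesis
    by (elim disjE) (simp_all add: krawtchouk_transform_def krawtchouk_def atMost_Suc numeral_eq_Suc)
qed

lemma krawtchouk_transform_cmult:
  "krawtchouk_transform r (\<lambda>h. a * F h) = a * krawtchouk_transform r F"
  by (simp add: krawtchouk_transform_def sum_distrib_left mult.left_commute)

lemma kernel_eigenvalue_eq_krawtchouk:
  assumes "S \<subseteq> {..<3}"
  shows "kernel_eigenvalue S F = krawtchouk_transform (card S) F"
proof -
  have eight: "{..<8::nat} = {0, 1, 2, 3, 4, 5, 6, 7}" and three: "{..<3::nat} = {0, 1, 2}"
    by auto
  have "S \<in> Pow {0, 1, 2}" using assms by auto
  also have "Pow {0, 1, 2::nat} = {{}, {0}, {1}, {2}, {0, 1}, {0, 2}, {1, 2}, {0, 1, 2}}"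
    by (simp add: Pow_insert insert_commute)
  finally show ?thesis
    by (elim insertE emptyE)
      (simp_all add: kernel_eigenvalue_def walsh_def hamming_def bit_sign_def eight three,
       simp_all add: krawtchouk_transform_def krawtchouk_def atMost_Suc numeral_3_eq_3 numeral_2_eq_2)
qed

lemma kernel_eigenvalue_diff_const:
  assumes "S \<subseteq> {..<3}" "S \<noteq> {}"
  shows "kernel_eigenvalue S (\<lambda>h. F h - c) = krawtchouk_transform (card S) F"
proof -
  have "finite S" using assms(1) finite_subset by blast
  then have "1 \<le> card S" "card S \<le> 3"
    using assms card_mono[OF _ assms(1)] by (simp_all add: Suc_le_eq card_gt_0_iff)
  then show ?thesis
    by (simp add: kernel_eigenvalue_eq_krawtchouk[OF assms(1)] krawtchouk_transform_diff_const)
qed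

lemma walsh_partner_exists:
  assumes "S \<subseteq> {..<3}" "S \<noteq> {}"
  obtains k T where "k < 3" "T \<subseteq> {..<3}" "T \<noteq> {}" "\<And>i. walsh T i = walsh S i * bit_sign k i"
    and "{card S, card T} = {1, 2} \<or> {card S, card T} = {2, 3}"
proof (cases "S = {0, 1, 2}")
  case True
  have "walsh {1, 2} i = walsh S i * bit_sign 0 i" for i
    using bit_sign_cases[of 0 i] by (auto simp: True walsh_def)
  moreover have "{card S, card {1, 2::nat}} = {2, 3}"
    by (simp add: True numeral_2_eq_2 numeral_3_eq_3 insert_commute)
  ultimately show ?thesis using that[of 0 "{1, 2}"] by auto
next
  case False
  have fin: "finite S" using assms(1) finite_subset by blast
  obtain k where k: "k < 3" "k \<notin> S" using assms(1) False by fastforce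
  have "S \<subset> {0, 1, 2}" using assms(1) False by auto
  then have "card S < 3" using psubset_card_mono[of "{0, 1, 2::nat}" S] by simp
  moreover have "0 < card S" using fin assms(2) by (simp add: card_gt_0_iff)
  ultimately have "card S = 1 \<or> card S = 2" by arith
  then have "{card S, card (insert k S)} = {1, 2} \<or> {card S, card (insert k S)} = {2, 3}"
    using fin k(2) by (elim disjE) (simp_all add: numeral_2_eq_2 numeral_3_eq_3)
  moreover have "walsh (insert k S) i = walsh S i * bit_sign k i" for i
    using fin k(2) by (simp add: walsh_def)
  ultimately show ?thesis using that[of k "insert k S"] assms(1) k(1) by auto
qed

lemma walsh_coefficients_vanish_imp_constant:
  fixes x :: "nat \<Rightarrow> real"
  assumes "\<And>S. S \<subseteq> {..<3} \<Longrightarrow> S \<noteq> {} \<Longrightarrow> (\<Sum>j<8. walsh S j * x j) = 0"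
    and "j < 8"
  shows "x j = x 0"
proof -
  have eight: "{..<8::nat} = {0, 1, 2, 3, 4, 5, 6, 7}" by auto
  have coefficient: "(\<Sum>j<8. walsh S j * x j) = 0"
    if "S \<in> {{0}, {1}, {2}, {0, 1}, {0, 2}, {1, 2}, {0, 1, 2}}" for S
    using that by (intro assms(1)) auto
  have "x 0 - x 1 + x 2 - x 3 + x 4 - x 5 + x 6 - x 7 = 0"
    using coefficient[of "{0}"] by (simp add: walsh_def bit_sign_def eight)
  moreover have "x 0 + x 1 - x 2 - x 3 + x 4 + x 5 - x 6 - x 7 = 0"
    using coefficient[of "{1}"] by (simp add: walsh_def bit_sign_def eight)
  moreover have "x 0 + x 1 + x 2 + x 3 - x 4 - x 5 - x 6 - x 7 = 0"
    using coefficient[of "{2}"] by (simp add: walsh_def bit_sign_def eight)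
  moreover have "x 0 - x 1 - x 2 + x 3 + x 4 - x 5 - x 6 + x 7 = 0"
    using coefficient[of "{0, 1}"] by (simp add: walsh_def bit_sign_def eight)
  moreover have "x 0 - x 1 + x 2 - x 3 - x 4 + x 5 - x 6 + x 7 = 0"
    using coefficient[of "{0, 2}"] by (simp add: walsh_def bit_sign_def eight)
  moreover have "x 0 + x 1 - x 2 - x 3 - x 4 - x 5 + x 6 + x 7 = 0"
    using coefficient[of "{1, 2}"] by (simp add: walsh_def bit_sign_def eight)
  moreover have "x 0 - x 1 - x 2 + x 3 - x 4 + x 5 + x 6 - x 7 = 0"
    using coefficient[of "{0, 1, 2}"] by (simp add: walsh_def bit_sign_def eight)
  moreover have "j \<in> {0, 1, 2, 3, 4, 5, 6, 7}" using assms(2) by auto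
  ultimately show ?thesis by auto
qed

section \<open>Inverse cubed distances in the nested cubes\<close>

definition inv_cube_dist :: "real \<Rightarrow> real \<Rightarrow> nat \<Rightarrow> real" where
  "inv_cube_dist a b h = 1 / sqrt (3 * (a - b)^2 + 4 * a * b * h) ^ 3"

lemma cube_vertex_nth:
  "cube_vertex j $ 1 = bit_sign 0 j" "cube_vertex j $ 2 = bit_sign 1 j" "cube_vertex j $ 3 = bit_sign 2 j"
  by (simp_all add: cube_vertex_def bit_sign_def)

lemma cube_vertex_coordinate:
  assumes "k < 3"
  obtains n where "\<And>j. cube_vertex j $ n = bit_sign k j"
proof -
  have "k = 0 \<or> k = 1 \<or> k = 2" using assms by auto
  then show ?thesis using that cube_vertex_nth by blast
qed

lemma norm_scaled_cube_vertex_diff: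
  "norm (a *\<^sub>R cube_vertex j - b *\<^sub>R cube_vertex i) = sqrt (3 * (a - b)^2 + 4 * a * b * hamming i j)"
proof -
  have three: "{..<3::nat} = {0, 1, 2}" by auto
  have square: "(a * bit_sign k j - b * bit_sign k i)^2
      = (a - b)^2 + 4 * a * b * of_bool (bit_sign k i \<noteq> bit_sign k j)" for k
    using bit_sign_cases[of k i] bit_sign_cases[of k j] by (auto simp: power2_eq_square algebra_simps)
  have "norm (a *\<^sub>R cube_vertex j - b *\<^sub>R cube_vertex i)
      = sqrt (\<Sum>k<3. (a * bit_sign k j - b * bit_sign k i)^2)"
    by (simp add: norm_vec_def L2_set_def sum_3 cube_vertex_nth three)
  also have "\<dots> = sqrt (3 * (a - b)^2 + 4 * a * b * hamming i j)"
    by (simp add: square sum.distrib sum_distrib_left hamming_def)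
  finally show ?thesis .
qed

lemma inv_cube_dist_commute: "inv_cube_dist a b h = inv_cube_dist b a h"
  by (simp add: inv_cube_dist_def power2_commute ac_simps)

lemma inv_cube_dist_scale:
  assumes "0 < s"
  shows "inv_cube_dist (s * a) (s * b) h = inv_cube_dist a b h / s^3"
proof -
  have "3 * (s * a - s * b)^2 + 4 * (s * a) * (s * b) * h = s^2 * (3 * (a - b)^2 + 4 * a * b * h)"
    by (simp add: power2_eq_square algebra_simps)
  then have "sqrt (3 * (s * a - s * b)^2 + 4 * (s * a) * (s * b) * h)
      = s * sqrt (3 * (a - b)^2 + 4 * a * b * h)"
    using assms by (simp add: real_sqrt_mult)
  then show ?thesis by (simp add: inv_cube_dist_def power_mult_distrib)
qed

lemma inv_cube_dist_antimono:
  assumes "0 < a" "0 < b" "a \<noteq> b" "h \<le> h'"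
  shows "inv_cube_dist a b h' \<le> inv_cube_dist a b h"
proof -
  have pos: "0 < 3 * (a - b)^2 + 4 * a * b * h" "0 < 3 * (a - b)^2 + 4 * a * b * h'"
    using assms by (intro add_pos_nonneg; simp)+
  have "3 * (a - b)^2 + 4 * a * b * h \<le> 3 * (a - b)^2 + 4 * a * b * h'"
    using assms by simp
  then have "sqrt (3 * (a - b)^2 + 4 * a * b * h) ^ 3 \<le> sqrt (3 * (a - b)^2 + 4 * a * b * h') ^ 3"
    using pos by (intro power_mono) auto
  then show ?thesis unfolding inv_cube_dist_def using pos
    by (intro divide_left_mono mult_pos_pos) auto
qed

text \<open>The \<open>k\<close>-th coordinate of the left-hand side of the central configuration equation at the
  point \<open>b *\<^sub>R cube_vertex i\<close> (\<open>b = 1\<close>: outer cube, \<open>b = t\<close>: inner cube). The term \<open>j = i\<close> of the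
  outer sum for \<open>b = 1\<close> carries the junk value \<open>inv_cube_dist 1 1 0 = 1 / 0 = 0\<close>, but its
  displacement factor vanishes anyway.\<close>

definition nested_force :: "(nat \<Rightarrow> real) \<Rightarrow> real \<Rightarrow> real \<Rightarrow> real \<Rightarrow> nat \<Rightarrow> nat \<Rightarrow> real" where
  "nested_force m t c b i k =
     (\<Sum>j<8. m j * (inv_cube_dist 1 b (hamming i j) - c) * (bit_sign k j - b * bit_sign k i))
   + (\<Sum>j<8. m (j + 8) * (inv_cube_dist t b (hamming i j) - c) * (t * bit_sign k j - b * bit_sign k i))"

lemma sum_lessThan_16_split:
  fixes f :: "nat \<Rightarrow> 'a::comm_monoid_add"
  shows "(\<Sum>j<16. f j) = (\<Sum>j<8. f j) + (\<Sum>j<8. f (j + 8))"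
proof -
  have "(\<Sum>j<16. f j) = sum f {0..<8} + sum f {8..<16}"
    by (simp add: lessThan_atLeast0 sum.atLeastLessThan_concat)
  also have "sum f {8..<16} = (\<Sum>j<8. f (j + 8))"
    using sum.shift_bounds_nat_ivl[of f 0 8 8] by (simp add: lessThan_atLeast0)
  finally show ?thesis by (simp add: lessThan_atLeast0)
qed

lemma nested_cubes_outer: "j < 8 \<Longrightarrow> nested_cubes t j = 1 *\<^sub>R cube_vertex j"
  by (simp add: nested_cubes_def)

lemma nested_cubes_inner: "nested_cubes t (j + 8) = t *\<^sub>R cube_vertex j"
  by (simp add: nested_cubes_def)

lemma nested_force_eq_0:
  assumes balance: "(\<Sum>j\<in>{..<16} - {p}. (m j * (1 / norm (nested_cubes t j - nested_cubes t p) ^ 3 - c))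
                        *\<^sub>R (nested_cubes t j - nested_cubes t p)) = 0"
    and "p < 16" and p: "nested_cubes t p = b *\<^sub>R cube_vertex i" and "k < 3"
  shows "nested_force m t c b i k = 0"
proof -
  define f where "f j = (m j * (1 / norm (nested_cubes t j - nested_cubes t p) ^ 3 - c))
                          *\<^sub>R (nested_cubes t j - nested_cubes t p)" for j
  have "(\<Sum>j<16. f j) = f p + (\<Sum>j\<in>{..<16} - {p}. f j)"
    using \<open>p < 16\<close> by (intro sum.remove) auto
  then have "(\<Sum>j<16. f j) = 0" using balance by (simp add: f_def)
  then have total: "(\<Sum>j<8. f j) + (\<Sum>j<8. f (j + 8)) = 0"
    by (simp only: sum_lessThan_16_split)
  obtain n where n: "\<And>j. cube_vertex j $ n = bit_sign k j"
    using cube_vertex_coordinate[OF \<open>k < 3\<close>] by blast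
  have outer: "f j $ n = m j * (inv_cube_dist 1 b (hamming i j) - c) * (bit_sign k j - b * bit_sign k i)"
    if "j < 8" for j
    by (simp add: f_def nested_cubes_outer[OF that] p norm_scaled_cube_vertex_diff inv_cube_dist_def n
        del: scaleR_one)
  have inner: "f (j + 8) $ n
      = m (j + 8) * (inv_cube_dist t b (hamming i j) - c) * (t * bit_sign k j - b * bit_sign k i)" for j
    by (simp add: f_def nested_cubes_inner p norm_scaled_cube_vertex_diff inv_cube_dist_def n)
  have "((\<Sum>j<8. f j) + (\<Sum>j<8. f (j + 8))) $ n = nested_force m t c b i k"
    by (simp add: nested_force_def outer inner)
  then show ?thesis using total by simp
qed

lemma central_configuration_nested_force:
  assumes "central_configuration 16 m (nested_cubes t)"
  obtains c where "\<And>i k. i < 8 \<Longrightarrow> k < 3 \<Longrightarrow> nested_force m t c 1 i k = 0"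
    and "\<And>i k. i < 8 \<Longrightarrow> k < 3 \<Longrightarrow> nested_force m t c t i k = 0"
proof -
  obtain c where balance: "\<And>p. p < 16 \<Longrightarrow>
      (\<Sum>j\<in>{..<16} - {p}. (m j * (1 / norm (nested_cubes t j - nested_cubes t p) ^ 3 - c))
                            *\<^sub>R (nested_cubes t j - nested_cubes t p)) = 0"
    using assms unfolding central_configuration_def by blast
  show ?thesis
  proof (rule that[of c])
    show "nested_force m t c 1 i k = 0" if "i < 8" "k < 3" for i k
      by (rule nested_force_eq_0[OF balance[of i]]) (use that in \<open>simp_all add: nested_cubes_outer\<close>)
    show "nested_force m t c t i k = 0" if "i < 8" "k < 3" for i k
      by (rule nested_force_eq_0[OF balance[of "i + 8"]]) (use that in \<open>simp_all add: nested_cubes_inner\<close>)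
  qed
qed

section \<open>The inequalities between the potentials\<close>

text \<open>Both bounds are instances of \<open>6 s V \<le> V\<^sup>2 + 9 s\<^sup>2\<close> for \<open>s = sqrt (U / 3)\<close>, with
  equality at \<open>V = 3 s\<close>.\<close>

lemma inverse_sqrt_cube_bounds:
  fixes U V :: real
  assumes "0 < U" "0 < V"
  shows "18 * V / (U * (V^2 + 3 * U)) \<le> 1 / sqrt (U / 3) ^ 3"
    and "1 / sqrt (U / 3) ^ 3 \<le> 3 * (V^2 + 3 * U) / (2 * U^2 * V)"
proof -
  define s where "s = sqrt (U / 3)"
  have s: "0 < s" and U: "U = 3 * s^2" using assms by (auto simp: s_def)
  have "0 \<le> (V - 3 * s)^2" by simp
  then have key: "6 * V * s \<le> V^2 + 9 * s^2"
    by (simp add: power2_eq_square algebra_simps)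
  have pos: "0 < s^2 * (V^2 + 9 * s^2)" "0 < s^4 * V"
    using s assms by (simp_all add: add_nonneg_pos)
  show "18 * V / (U * (V^2 + 3 * U)) \<le> 1 / sqrt (U / 3) ^ 3"
  proof -
    have "U * (V^2 + 3 * U) = 3 * (s^2 * (V^2 + 9 * s^2))"
      unfolding U by (simp add: algebra_simps)
    then have "18 * V / (U * (V^2 + 3 * U)) = 6 * V / (s^2 * (V^2 + 9 * s^2))"
      by simp
    also have "\<dots> \<le> 1 / s^3"
      using mult_left_mono[OF key, of "s^2"] s pos
      by (simp add: divide_simps power3_eq_cube power2_eq_square algebra_simps)
    finally show ?thesis by (simp add: s_def)
  qed
  show "1 / sqrt (U / 3) ^ 3 \<le> 3 * (V^2 + 3 * U) / (2 * U^2 * V)"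
  proof -
    have "1 / s^3 \<le> (V^2 + 9 * s^2) / (6 * s^4 * V)"
      using key s pos
      by (simp add: divide_simps power4_eq_xxxx power3_eq_cube power2_eq_square algebra_simps)
    also have "\<dots> = 3 * (V^2 + 3 * U) / (2 * U^2 * V)"
      unfolding U using s assms by (simp add: field_simps)
    finally show ?thesis by (simp add: s_def)
  qed
qed

text \<open>In both rational bounds, clearing denominators leaves \<open>r\<^sup>2\<close> resp. \<open>r\<^sup>3\<close> times a polynomial
  in \<open>r = w - 1\<close> with positive coefficients.\<close>

lemma rational_bound_1:
  fixes w :: real
  assumes w: "1 \<le> w"
  shows "w * (3 * ((2 + w)^2 + 3 * (2 + w^2)) / (2 * (2 + w^2)^2 * (2 + w)))
         + 3 * ((1 + 2 * w)^2 + 3 * (1 + 2 * w^2)) / (2 * (1 + 2 * w^2)^2 * (1 + 2 * w))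
         \<le> 1 + 1 / w^2"
proof -
  define r where "r = w - 1"
  have r: "0 \<le> r" using w by (simp add: r_def)
  define A B C E where "A = 2 + w^2" "B = 1 + 2 * w^2" "C = 2 + w" "E = 1 + 2 * w"
  have pos: "0 < w" "0 < A" "0 < B" "0 < C" "0 < E"
    using w unfolding A_B_C_E_def by (auto intro: add_pos_nonneg)
  define X where
    "X = 1 + 1 / w^2 - w * (3 * (C^2 + 3 * A) / (2 * A^2 * C)) - 3 * (E^2 + 3 * B) / (2 * B^2 * E)"
  define D where "D = w^2 * (2 * A^2 * C) * (2 * B^2 * E)"
  have "X * D = r^2 * (3888 + r*(19440 + r*(47376 + r*(72864 + r*(77188 + r*(58188
                  + r*(31372 + r*(11892 + r*(3024 + r*(464 + r*32))))))))))"
    unfolding X_def D_def using pos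
    by (simp add: field_simps) (unfold A_B_C_E_def r_def, algebra)
  also have "\<dots> \<ge> 0" using r by simp
  finally have "0 \<le> X * D" .
  moreover have "0 < D" unfolding D_def using pos by simp
  ultimately have "0 \<le> X" by (simp add: zero_le_mult_iff)
  then show ?thesis unfolding X_def A_B_C_E_def by simp
qed

lemma rational_bound_2:
  fixes w :: real
  assumes w: "1 \<le> w"
  shows "(2 + w) * (3 * ((2 + w)^2 + 3 * (2 + w^2)) / (2 * (2 + w^2)^2 * (2 + w)))
         \<le> 1 - 1 / w^2
            + (1 + 2 * w) * (18 * (1 + 2 * w) / ((1 + 2 * w^2) * ((1 + 2 * w)^2 + 3 * (1 + 2 * w^2))))"
proof -
  define r where "r = w - 1"
  have r: "0 \<le> r" using w by (simp add: r_def)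
  define A B C E K where "A = 2 + w^2" "B = 1 + 2 * w^2" "C = 2 + w" "E = 1 + 2 * w"
    "K = (1 + 2 * w)^2 + 3 * (1 + 2 * w^2)"
  have pos: "0 < w" "0 < A" "0 < B" "0 < C" "0 < K"
    using w unfolding A_B_C_E_K_def by (auto intro: add_pos_nonneg add_nonneg_pos)
  define X where
    "X = 1 - 1 / w^2 + E * (18 * E / (B * K)) - C * (3 * (C^2 + 3 * A) / (2 * A^2 * C))"
  define D where "D = w^2 * (2 * A^2 * C) * (B * K)"
  have "X * D = r^3 * (6480 + r*(24732 + r*(42300 + r*(42456 + r*(27448 + r*(11732
                  + r*(3252 + r*(536 + r*40))))))))"
    unfolding X_def D_def using pos
    by (simp add: field_simps) (unfold A_B_C_E_K_def r_def, algebra)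
  also have "\<dots> \<ge> 0" using r by simp
  finally have "0 \<le> X * D" .
  moreover have "0 < D" unfolding D_def using pos by simp
  ultimately have "0 \<le> X" by (simp add: zero_le_mult_iff)
  then show ?thesis unfolding X_def A_B_C_E_K_def by simp
qed

lemma potential_inequality_1:
  fixes w :: real
  assumes w: "1 \<le> w"
  shows "w / sqrt ((2 + w^2) / 3) ^ 3 + 1 / sqrt ((1 + 2 * w^2) / 3) ^ 3 \<le> 1 + 1 / w^2"
proof -
  have pos: "0 < w" "0 < 2 + w" "0 < 2 + w^2" "0 < 1 + 2 * w" "0 < 1 + 2 * w^2"
    using w by (auto intro: add_pos_nonneg)
  have "w * (1 / sqrt ((2 + w^2) / 3) ^ 3)
      \<le> w * (3 * ((2 + w)^2 + 3 * (2 + w^2)) / (2 * (2 + w^2)^2 * (2 + w)))"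
    using pos by (intro mult_left_mono inverse_sqrt_cube_bounds(2)) auto
  moreover have "1 / sqrt ((1 + 2 * w^2) / 3) ^ 3
      \<le> 3 * ((1 + 2 * w)^2 + 3 * (1 + 2 * w^2)) / (2 * (1 + 2 * w^2)^2 * (1 + 2 * w))"
    using pos by (intro inverse_sqrt_cube_bounds(2)) auto
  ultimately show ?thesis using rational_bound_1[OF w] by simp
qed

lemma potential_inequality_2:
  fixes w :: real
  assumes w: "1 \<le> w"
  shows "(2 + w) / sqrt ((2 + w^2) / 3) ^ 3 \<le> 1 - 1 / w^2 + (1 + 2 * w) / sqrt ((1 + 2 * w^2) / 3) ^ 3"
proof -
  have pos: "0 < w" "0 < 2 + w" "0 < 2 + w^2" "0 < 1 + 2 * w" "0 < 1 + 2 * w^2"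
    using w by (auto intro: add_pos_nonneg)
  have "(2 + w) * (1 / sqrt ((2 + w^2) / 3) ^ 3)
      \<le> (2 + w) * (3 * ((2 + w)^2 + 3 * (2 + w^2)) / (2 * (2 + w^2)^2 * (2 + w)))"
    using pos by (intro mult_left_mono inverse_sqrt_cube_bounds(2)) auto
  moreover have "(1 + 2 * w) * (18 * (1 + 2 * w) / ((1 + 2 * w^2) * ((1 + 2 * w)^2 + 3 * (1 + 2 * w^2))))
      \<le> (1 + 2 * w) * (1 / sqrt ((1 + 2 * w^2) / 3) ^ 3)"
    using pos by (intro mult_left_mono inverse_sqrt_cube_bounds(1)) auto
  ultimately show ?thesis using rational_bound_2[OF w] by simp
qed

lemma inv_cube_dist_outer_inner:
  assumes "0 < t" "t < 1"
  defines "w \<equiv> (1 + t) / (1 - t)"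
  shows "inv_cube_dist t 1 h = 1 / sqrt ((3 + (w^2 - 1) * h) / 3) ^ 3 / (sqrt 3 * (1 - t)) ^ 3"
proof -
  have w4t: "(1 - t)^2 * (w^2 - 1) = 4 * t"
    using assms(1,2) unfolding w_def
    by (simp add: field_simps) (simp add: power2_eq_square power4_eq_xxxx algebra_simps)
  have square: "(sqrt 3 * (1 - t))^2 * ((3 + (w^2 - 1) * h) / 3) = 3 * (t - 1)^2 + 4 * t * 1 * h"
  proof -
    have "(sqrt 3 * (1 - t))^2 = 3 * (1 - t)^2" by (simp add: power_mult_distrib)
    then have "(sqrt 3 * (1 - t))^2 * ((3 + (w^2 - 1) * h) / 3)
        = 3 * (1 - t)^2 + (1 - t)^2 * (w^2 - 1) * h"
      by (simp add: field_simps)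
    also have "\<dots> = 3 * (t - 1)^2 + 4 * t * 1 * h"
      by (simp only: w4t) (simp add: power2_commute)
    finally show ?thesis .
  qed
  have "sqrt (3 * (t - 1)^2 + 4 * t * 1 * h) = sqrt 3 * (1 - t) * sqrt ((3 + (w^2 - 1) * h) / 3)"
    using assms(2) by (simp only: square[symmetric] real_sqrt_mult) simp
  then show ?thesis by (simp add: inv_cube_dist_def power_mult_distrib)
qed

lemma outer_inner_krawtchouk_step_up:
  assumes "0 < t" "t < 1"
  defines "E \<equiv> inv_cube_dist t 1"
  shows "t * krawtchouk_transform 1 E \<le> krawtchouk_transform 2 E"
    and "t * krawtchouk_transform 2 E \<le> krawtchouk_transform 3 E"
proof -
  define w where "w = (1 + t) / (1 - t)"
  define K where "K = 1 / (sqrt 3 * (1 - t)) ^ 3"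
  define a\<^sub>1 where "a\<^sub>1 = 1 / sqrt ((2 + w^2) / 3) ^ 3"
  define a\<^sub>2 where "a\<^sub>2 = 1 / sqrt ((1 + 2 * w^2) / 3) ^ 3"
  have w: "1 \<le> w" and tw: "1 + t = w * (1 - t)" and K: "0 < K"
    using assms by (simp_all add: w_def K_def field_simps)
  have E: "E 0 = K" "E 1 = K * a\<^sub>1" "E 2 = K * a\<^sub>2" "E 3 = K / w^3"
    using inv_cube_dist_outer_inner[OF assms(1,2), of 0] inv_cube_dist_outer_inner[OF assms(1,2), of 1]
      inv_cube_dist_outer_inner[OF assms(1,2), of 2] inv_cube_dist_outer_inner[OF assms(1,2), of 3] w
    unfolding E_def K_def a\<^sub>1_def a\<^sub>2_def w_def[symmetric] by (simp_all add: algebra_simps)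
  have "krawtchouk_transform 2 E - t * krawtchouk_transform 1 E
      = (1 - t) * (E 0 - E 2) - (1 + t) * (E 1 - E 3)"
    unfolding krawtchouk_transform_eq by (simp add: algebra_simps)
  also have "\<dots> = K * (1 - t) * (1 + 1 / w^2 - (w * a\<^sub>1 + a\<^sub>2))"
    unfolding tw E using w by (simp add: field_simps power2_eq_square power3_eq_cube)
  also have "\<dots> \<ge> 0"
    using potential_inequality_1[OF w] K assms unfolding a\<^sub>1_def a\<^sub>2_def by simp
  finally show "t * krawtchouk_transform 1 E \<le> krawtchouk_transform 2 E" by simp
  have "krawtchouk_transform 3 E - t * krawtchouk_transform 2 E
      = (1 - t) * (E 0 - 2 * E 1 + E 2) - (1 + t) * (E 1 - 2 * E 2 + E 3)"
    unfolding krawtchouk_transform_eq by (simp add: algebra_simps)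
  also have "\<dots> = K * (1 - t) * (1 - 1 / w^2 + (1 + 2 * w) * a\<^sub>2 - (2 + w) * a\<^sub>1)"
    unfolding tw E using w by (simp add: field_simps power2_eq_square power3_eq_cube)
  also have "\<dots> \<ge> 0"
    using potential_inequality_2[OF w] K assms unfolding a\<^sub>1_def a\<^sub>2_def by simp
  finally show "t * krawtchouk_transform 2 E \<le> krawtchouk_transform 3 E" by simp
qed

lemma outer_inner_krawtchouk_step_down:
  assumes "0 < t" "t < 1"
  defines "E \<equiv> inv_cube_dist t 1"
  shows "t * krawtchouk_transform 2 E \<le> krawtchouk_transform 1 E"
    and "t * krawtchouk_transform 3 E \<le> krawtchouk_transform 2 E"
proof -
  have E_antimono: "E h' \<le> E h" if "h \<le> h'" for h h'
    unfolding E_def using assms that by (intro inv_cube_dist_antimono) auto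
  have "krawtchouk_transform 1 E - t * krawtchouk_transform 2 E
      = (1 - t) * (E 0 - E 2) + (1 + t) * (E 1 - E 3)"
    unfolding krawtchouk_transform_eq by (simp add: algebra_simps)
  also have "\<dots> \<ge> 0" using assms E_antimono[of 0 2] E_antimono[of 1 3] by simp
  finally show "t * krawtchouk_transform 2 E \<le> krawtchouk_transform 1 E" by simp
  have "krawtchouk_transform 2 E - t * krawtchouk_transform 3 E
      = (krawtchouk_transform 2 E - t * krawtchouk_transform 1 E) + 4 * t * (E 1 - E 2)"
    unfolding krawtchouk_transform_eq by (simp add: algebra_simps)
  also have "\<dots> \<ge> 0"
    using outer_inner_krawtchouk_step_up(1)[OF assms(1,2)] assms(1) E_antimono[of 1 2]
    unfolding E_def by simp
  finally show "t * krawtchouk_transform 3 E \<le> krawtchouk_transform 2 E" by simp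
qed

lemma outer_krawtchouk_strict_decreasing:
  defines "G \<equiv> inv_cube_dist 1 1"
  shows "krawtchouk_transform 2 G < krawtchouk_transform 1 G"
    and "krawtchouk_transform 3 G < krawtchouk_transform 2 G"
proof -
  have G: "G 1 = 1 / 8" "G 2 = 1 / sqrt 8 ^ 3" "G 3 = 1 / sqrt 12 ^ 3"
    by (simp_all add: G_def inv_cube_dist_def)
  have "2 < sqrt 8" "2 < sqrt 12" by (simp_all add: real_less_rsqrt)
  then have "2 * 8 < sqrt 8 ^ 2 * sqrt 8" "2 ^ 3 < sqrt 12 ^ 3"
    by (simp, intro power_strict_mono) auto
  then have "2 * G 2 < G 1" "0 < G 3" "G 3 < G 1"
    unfolding G by (simp_all add: divide_simps power3_eq_cube power2_eq_square)
  then show "krawtchouk_transform 2 G < krawtchouk_transform 1 G"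
    and "krawtchouk_transform 3 G < krawtchouk_transform 2 G"
    unfolding krawtchouk_transform_eq by linarith+
qed

lemma nested_determinant_nonzero:
  assumes t: "0 < t" "t < 1" and cards: "{r, r'} = {1, 2} \<or> {r, r'} = {2, 3}"
  defines "G \<equiv> inv_cube_dist 1 1" and "E \<equiv> inv_cube_dist t 1"
  shows "(krawtchouk_transform r' G - krawtchouk_transform r G)
           * (t * (krawtchouk_transform r' G / t^3) - t * (krawtchouk_transform r G / t^3))
         \<noteq> (t * krawtchouk_transform r' E - krawtchouk_transform r E)
           * (krawtchouk_transform r' E - t * krawtchouk_transform r E)"
proof -
  have "r = 1 \<and> r' = 2 \<or> r = 2 \<and> r' = 1 \<or> r = 2 \<and> r' = 3 \<or> r = 3 \<and> r' = 2"
    using cards by (auto simp: doubleton_eq_iff)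
  then have distinct: "krawtchouk_transform r' G \<noteq> krawtchouk_transform r G"
    and steps: "t * krawtchouk_transform r' E \<le> krawtchouk_transform r E"
      "t * krawtchouk_transform r E \<le> krawtchouk_transform r' E"
    using outer_krawtchouk_strict_decreasing outer_inner_krawtchouk_step_up[OF t]
      outer_inner_krawtchouk_step_down[OF t]
    unfolding G_def E_def by auto
  have "(krawtchouk_transform r' G - krawtchouk_transform r G)
          * (t * (krawtchouk_transform r' G / t^3) - t * (krawtchouk_transform r G / t^3))
      = (krawtchouk_transform r' G - krawtchouk_transform r G)^2 / t^2"
    using t by (simp add: field_simps power2_eq_square power3_eq_cube)
  also have "\<dots> > 0" using distinct t by simp
  finally show ?thesis
    using mult_nonpos_nonneg[of "t * krawtchouk_transform r' E - krawtchouk_transform r E"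
        "krawtchouk_transform r' E - t * krawtchouk_transform r E"] steps
    by linarith
qed

section \<open>The decoupled equations\<close>

lemma homogeneous_2x2_trivial:
  fixes M N a b c d :: real
  assumes "M * a + N * b = 0" "M * c + N * d = 0" "a * d \<noteq> b * c"
  shows "M = 0" and "N = 0"
proof -
  have "M * (a * d - b * c) = d * (M * a + N * b) - b * (M * c + N * d)" by (simp add: algebra_simps)
  with assms show "M = 0" by simp
  have "N * (a * d - b * c) = a * (M * c + N * d) - c * (M * a + N * b)" by (simp add: algebra_simps)
  with assms show "N = 0" by simp
qed

lemma nested_force_walsh_transform:
  assumes "\<And>i. walsh T i = walsh S i * bit_sign k i"
  shows "(\<Sum>i<8. walsh S i * bit_sign k i * nested_force m t c b i k)
       = (\<Sum>j<8. walsh S j * m j)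
           * (kernel_eigenvalue T (\<lambda>h. inv_cube_dist 1 b h - c)
              - b * kernel_eigenvalue S (\<lambda>h. inv_cube_dist 1 b h - c))
       + (\<Sum>j<8. walsh S j * m (j + 8))
           * (t * kernel_eigenvalue T (\<lambda>h. inv_cube_dist t b h - c)
              - b * kernel_eigenvalue S (\<lambda>h. inv_cube_dist t b h - c))"
  using walsh_transform_force[OF assms, of m "\<lambda>h. inv_cube_dist 1 b h - c" 1 b]
    walsh_transform_force[OF assms, of "\<lambda>j. m (j + 8)" "\<lambda>h. inv_cube_dist t b h - c" t b]
  by (simp add: nested_force_def distrib_left sum.distrib)

lemma nested_walsh_coefficients_vanish:
  assumes t: "0 < t" "t < 1"
    and outer: "\<And>i k. i < 8 \<Longrightarrow> k < 3 \<Longrightarrow> nested_force m t c 1 i k = 0"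
    and inner: "\<And>i k. i < 8 \<Longrightarrow> k < 3 \<Longrightarrow> nested_force m t c t i k = 0"
    and S: "S \<subseteq> {..<3}" "S \<noteq> {}"
  shows "(\<Sum>j<8. walsh S j * m j) = 0" and "(\<Sum>j<8. walsh S j * m (j + 8)) = 0"
proof -
  obtain k T where k: "k < 3" and T: "T \<subseteq> {..<3}" "T \<noteq> {}" "\<And>i. walsh T i = walsh S i * bit_sign k i"
    and cards: "{card S, card T} = {1, 2} \<or> {card S, card T} = {2, 3}"
    using walsh_partner_exists[OF S] by blast
  define r r' where "r = card S" and "r' = card T"
  define G E where "G = inv_cube_dist 1 1" and "E = inv_cube_dist t 1"
  define M N where "M = (\<Sum>j<8. walsh S j * m j)" and "N = (\<Sum>j<8. walsh S j * m (j + 8))"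
  have scaled: "inv_cube_dist t t = (\<lambda>h. 1 / t^3 * G h)"
    using inv_cube_dist_scale[OF t(1), of 1 1] by (auto simp: G_def)
  have inner_inner: "krawtchouk_transform q (inv_cube_dist t t) = krawtchouk_transform q G / t^3" for q
    unfolding scaled krawtchouk_transform_cmult by simp
  have "M * (krawtchouk_transform r' G - krawtchouk_transform r G)
      + N * (t * krawtchouk_transform r' E - krawtchouk_transform r E) = 0"
    using nested_force_walsh_transform[OF T(3), of m t c 1]
    by (simp add: outer k kernel_eigenvalue_diff_const S T M_def N_def r_def r'_def G_def E_def)
  moreover have "M * (krawtchouk_transform r' E - t * krawtchouk_transform r E)
      + N * (t * (krawtchouk_transform r' G / t^3) - t * (krawtchouk_transform r G / t^3)) = 0"
    using nested_force_walsh_transform[OF T(3), of m t c t]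
    by (simp add: inner k kernel_eigenvalue_diff_const S T M_def N_def r_def r'_def G_def E_def
        inner_inner inv_cube_dist_commute[of 1 t])
  moreover note nested_determinant_nonzero[OF t cards[folded r_def r'_def], folded G_def E_def]
  ultimately show "(\<Sum>j<8. walsh S j * m j) = 0" and "(\<Sum>j<8. walsh S j * m (j + 8)) = 0"
    using homogeneous_2x2_trivial unfolding M_def N_def by blast+
qed

theorem theorem12:
  fixes t :: real and m :: "nat \<Rightarrow> real"
  assumes "0 < t" and "t < 1"
    and "\<forall>i<16. 0 < m i"
    and "central_configuration 16 m (nested_cubes t)"
  shows "(\<forall>i<8. m i = m 0) \<and> (\<forall>i. 8 \<le> i \<and> i < 16 \<longrightarrow> m i = m 8)"
proof -
  obtain c where outer: "\<And>i k. i < 8 \<Longrightarrow> k < 3 \<Longrightarrow> nested_force m t c 1 i k = 0"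
    and inner: "\<And>i k. i < 8 \<Longrightarrow> k < 3 \<Longrightarrow> nested_force m t c t i k = 0"
    using central_configuration_nested_force[OF assms(4)] by blast
  note vanish = nested_walsh_coefficients_vanish[OF assms(1,2) outer inner]
  have outer_equal: "m i = m 0" if "i < 8" for i
    using walsh_coefficients_vanish_imp_constant[of m, OF vanish(1) that] by simp
  have inner_equal: "m (j + 8) = m 8" if "j < 8" for j
    using walsh_coefficients_vanish_imp_constant[of "\<lambda>j. m (j + 8)", OF vanish(2) that] by simp
  show ?thesis
  proof (intro conjI allI impI)
    show "m i = m 0" if "i < 8" for i
      using outer_equal[OF that] .
    show "m i = m 8" if "8 \<le> i \<and> i < 16" for i
      using inner_equal[of "i - 8"] that by auto
  qed
qed

end
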